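(* Let $R$ be a discrete valuation ring with field of fractions $K$, uniformizer $\pi$ and residue field $k$. Let $A$ be an $R$-algebra with an $R$-linear involution $a\mapsto a^*$, let $V$ be a finite-dimensional $K$-vector space which is an $A$-module (via an $R$-bilinear map $A\times V\to V$) admitting a lattice $L$ with $A\cdot L\subset L$, and let $B$ be a nondegenerate $K$-bilinear form on $V$ with $B(ax,y)=B(x,a^*y)$ for all $a\in A$, $x,y\in V$, where either $B$ is alternating, or $B$ is symmetric and $\mathrm{char}(k)\neq2$. Then there exists a lattice $M$ of $V$ with $A\cdot M\subset M$ which is almost self-dual with respect to $B$.
   Context: A lattice of $V$ is a free $R$-submodule $M$ with $K\otimes_RM\to V$ an isomorphism; its dual is $M'=\{x\in V:B(x,y)\in R\ \forall y\in M\}$; $M$ is almost self-dual if $\pi M'\subset M\subset M'$. *)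

theory Defs
  imports Main "HOL.Vector_Spaces"
begin

text \<open>The associated discrete valuation ring is R = {0} \<union> {x. v x \<ge> 0}, whose
fraction field is K.\<close>

definition discrete_valuation :: "('k::field \<Rightarrow> int) \<Rightarrow> bool" where
  "discrete_valuation v \<longleftrightarrow>
     (\<forall>x y. x \<noteq> 0 \<longrightarrow> y \<noteq> 0 \<longrightarrow> v (x * y) = v x + v y) \<and>
     (\<forall>x y. x \<noteq> 0 \<longrightarrow> y \<noteq> 0 \<longrightarrow> x + y \<noteq> 0 \<longrightarrow> v (x + y) \<ge> min (v x) (v y)) \<and>
     (\<forall>n. \<exists>x. x \<noteq> 0 \<and> v x = n)"

definition val_ring :: "('k::field \<Rightarrow> int) \<Rightarrow> 'k set" where
  "val_ring v = {x. x = 0 \<or> v x \<ge> 0}"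

definition val_max_ideal :: "('k::field \<Rightarrow> int) \<Rightarrow> 'k set" where
  "val_max_ideal v = {x. x = 0 \<or> v x > 0}"

definition residue_char_not_2 :: "('k::field \<Rightarrow> int) \<Rightarrow> bool" where
  "residue_char_not_2 v \<longleftrightarrow> (1 + 1 :: 'k) \<notin> val_max_ideal v"

text \<open>A lattice: a free R-submodule M of V such that K \<otimes>_R M \<rightarrow> V is an
isomorphism, i.e. M is the R-span of a K-basis of V.\<close>
definition is_lattice ::
  "('k::field \<Rightarrow> 'v::ab_group_add \<Rightarrow> 'v) \<Rightarrow> 'k set \<Rightarrow> 'v set \<Rightarrow> bool" where
  "is_lattice scale R M \<longleftrightarrow>
     (\<exists>b. finite b \<and> \<not> module.dependent scale b \<and> module.span scale b = UNIV \<and>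
          M = {y. \<exists>c. (\<forall>x\<in>b. c x \<in> R) \<and> y = (\<Sum>x\<in>b. scale (c x) x)})"

definition dual_lattice ::
  "'k set \<Rightarrow> ('v \<Rightarrow> 'v \<Rightarrow> 'k) \<Rightarrow> 'v set \<Rightarrow> 'v set" where
  "dual_lattice R B M = {x. \<forall>y\<in>M. B x y \<in> R}"

definition almost_self_dual ::
  "('k::field \<Rightarrow> 'v \<Rightarrow> 'v) \<Rightarrow> 'k set \<Rightarrow> 'k \<Rightarrow> ('v \<Rightarrow> 'v \<Rightarrow> 'k) \<Rightarrow> 'v set \<Rightarrow> bool" where
  "almost_self_dual scale R pi B M \<longleftrightarrow>
     (scale pi ` dual_lattice R B M \<subseteq> M \<and> M \<subseteq> dual_lattice R B M)"

end

theory Submission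
  imports Defs
begin

(* Scaling the given A-stable lattice by a power of pi gives an A-stable lattice M with
   M \<subseteq> M', and nondegeneracy of B gives pi^(k+1) M' \<subseteq> M for some k. Since B is symmetric
   or antisymmetric, M' is A-stable and B(M', M) \<subseteq> R, so for k \<ge> 1 the lattice
   N = M + pi^k M' is again A-stable with N \<subseteq> N': its only new pairing is
   pi^(2k) B(M', M') = pi^(k-1) B(pi^(k+1) M', M') \<subseteq> R. From M \<subseteq> N we get N' \<subseteq> M', hence
   pi^k N' \<subseteq> N, and descending on k reaches pi M' \<subseteq> M.
   That N is a lattice is the fact that an R-submodule commensurable with a lattice is free,
   proved by induction on a basis: the coefficients along a new basis vector form an R-submodule
   of K on which v is bounded below, hence one generated by an element of least valuation. *)

lemma alternating_imp_antisymmetric: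
  fixes B :: "'v::ab_group_add \<Rightarrow> 'v \<Rightarrow> 'k::ab_group_add"
  assumes "\<And>x y z. B (x + y) z = B x z + B y z" "\<And>x y z. B x (y + z) = B x y + B x z"
    and "\<And>x. B x x = 0"
  shows "B y x = - B x y"
proof -
  have "B (x + y) (x + y) = B x y + B y x"
    by (simp add: assms(1,2) assms(3)[of x] assms(3)[of y])
  then show ?thesis
    using assms(3)[of "x + y"] by (simp add: add_eq_0_iff)
qed

locale valued_field =
  fixes v :: "'k::field \<Rightarrow> int"
  assumes discrete_valuation: "discrete_valuation v"
begin

lemma val_mult: "x \<noteq> 0 \<Longrightarrow> y \<noteq> 0 \<Longrightarrow> v (x * y) = v x + v y"
  using discrete_valuation unfolding discrete_valuation_def by blast

lemma val_add_ge: "x \<noteq> 0 \<Longrightarrow> y \<noteq> 0 \<Longrightarrow> x + y \<noteq> 0 \<Longrightarrow> min (v x) (v y) \<le> v (x + y)"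
  using discrete_valuation unfolding discrete_valuation_def by blast

lemma val_one: "v 1 = 0"
  using val_mult[of 1 1] by simp

lemma val_uminus: "v (- x) = v x"
proof (cases "x = 0")
  case False
  have "v (-1) = 0"
    using val_mult[of "-1" "-1"] val_one by simp
  then show ?thesis
    using val_mult[of "-1" x] False by simp
qed simp

lemma val_divide: "x \<noteq> 0 \<Longrightarrow> y \<noteq> 0 \<Longrightarrow> v (x / y) = v x - v y"
  using val_mult[of x "inverse y"] val_mult[of y "inverse y"] val_one
  by (simp add: divide_inverse)

lemma val_power: "x \<noteq> 0 \<Longrightarrow> v (x ^ n) = int n * v x"
  by (induction n) (auto simp: val_one val_mult algebra_simps)

lemma val_ring_zero: "0 \<in> val_ring v" and val_ring_one: "1 \<in> val_ring v"
  by (auto simp: val_ring_def val_one)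

lemma val_ring_add: "x \<in> val_ring v \<Longrightarrow> y \<in> val_ring v \<Longrightarrow> x + y \<in> val_ring v"
  unfolding val_ring_def using val_add_ge[of x y] by fastforce

lemma val_ring_mult: "x \<in> val_ring v \<Longrightarrow> y \<in> val_ring v \<Longrightarrow> x * y \<in> val_ring v"
  unfolding val_ring_def using val_mult[of x y] by fastforce

lemma val_ring_uminus: "x \<in> val_ring v \<Longrightarrow> - x \<in> val_ring v"
  unfolding val_ring_def using val_uminus[of x] by auto

lemma val_ring_sum: "(\<And>i. i \<in> I \<Longrightarrow> f i \<in> val_ring v) \<Longrightarrow> sum f I \<in> val_ring v"
  by (induction I rule: infinite_finite_induct) (auto intro: val_ring_add val_ring_zero)

lemma val_ring_divide: "y \<noteq> 0 \<Longrightarrow> x = 0 \<or> v y \<le> v x \<Longrightarrow> x / y \<in> val_ring v"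
  unfolding val_ring_def using val_divide[of x y] by (cases "x = 0") auto

lemma ex_least_val_generator:
  assumes "c1 \<in> I" "c1 \<noteq> 0" and bounded: "\<And>c. c \<in> I \<Longrightarrow> c \<noteq> 0 \<Longrightarrow> n \<le> v c"
  shows "\<exists>c0\<in>I. c0 \<noteq> 0 \<and> (\<forall>c\<in>I. c / c0 \<in> val_ring v)"
proof -
  obtain c0 where c0: "c0 \<in> I" "c0 \<noteq> 0"
    and least: "\<And>c. c \<in> I \<Longrightarrow> c \<noteq> 0 \<Longrightarrow> nat (v c0 - n) \<le> nat (v c - n)"
    using ex_has_least_nat[of "\<lambda>c. c \<in> I \<and> c \<noteq> 0" c1 "\<lambda>c. nat (v c - n)"] assms(1,2)
    by blast
  have "c / c0 \<in> val_ring v" if "c \<in> I" for c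
    using least[OF that] bounded[OF that] bounded[OF c0] c0(2)
    by (intro val_ring_divide) (auto simp: nat_le_eq_zle)
  with c0 show ?thesis by blast
qed

end

context vector_space
begin

lemma independent_coeff_unique:
  assumes "finite b" "independent b" "(\<Sum>x\<in>b. c x *s x) = (\<Sum>x\<in>b. d x *s x)" "x \<in> b"
  shows "c x = d x"
proof (rule ccontr)
  assume "c x \<noteq> d x"
  moreover have "(\<Sum>x\<in>b. (c x - d x) *s x) = 0"
    using assms(3) by (simp add: scale_left_diff_distrib sum_subtractf)
  ultimately have "dependent b"
    using assms(1,4) by (auto simp: dependent_finite intro!: exI[of _ "\<lambda>x. c x - d x"])
  with assms(2) show False by simp
qed

lemma sum_delta_scale:
  assumes "finite S" "e \<in> S"
  shows "(\<Sum>x\<in>S. (if x = e then 1 else 0) *s x) = e"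
proof -
  have "(\<Sum>x\<in>S. (if x = e then 1 else 0) *s x) = (\<Sum>x\<in>S. if x = e then x else 0)"
    by (rule sum.cong) auto
  with assms show ?thesis
    by simp
qed

lemma coeff_unique_mod_span:
  assumes "e \<notin> span S" "x - c *s e \<in> span S" "x - d *s e \<in> span S"
  shows "c = d"
proof (rule ccontr)
  assume "c \<noteq> d"
  have "(x - c *s e) - (x - d *s e) = (d - c) *s e"
    by (simp add: scale_left_diff_distrib)
  then have "(d - c) *s e \<in> span S"
    using span_diff[OF assms(2,3)] by simp
  then have "(1 / (d - c)) *s (d - c) *s e \<in> span S"
    by (rule span_scale)
  with \<open>c \<noteq> d\<close> assms(1) show False by simp
qed

end

definition rspan :: "('k::field \<Rightarrow> 'v::ab_group_add \<Rightarrow> 'v) \<Rightarrow> 'k set \<Rightarrow> 'v set \<Rightarrow> 'v set" where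
  "rspan scale R S = {y. \<exists>c. (\<forall>x\<in>S. c x \<in> R) \<and> y = (\<Sum>x\<in>S. scale (c x) x)}"

definition plus_scaled :: "('k \<Rightarrow> 'v \<Rightarrow> 'v::ab_group_add) \<Rightarrow> 'v set \<Rightarrow> 'k \<Rightarrow> 'v set \<Rightarrow> 'v set" where
  "plus_scaled scale M c U = {x + scale c u | x u. x \<in> M \<and> u \<in> U}"

locale dvr_vector_space = vector_space scale + valued_field v
  for scale :: "'k::field \<Rightarrow> 'v::ab_group_add \<Rightarrow> 'v" (infixr \<open>*s\<close> 75) and v +
  fixes pi :: 'k
  assumes uniformizer_nonzero: "pi \<noteq> 0" and val_uniformizer: "v pi = 1"
begin

abbreviation "R \<equiv> val_ring v"
abbreviation "Rspan S \<equiv> rspan scale R S"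

definition rsubmodule :: "'v set \<Rightarrow> bool" where
  "rsubmodule N \<longleftrightarrow> 0 \<in> N \<and> (\<forall>x\<in>N. \<forall>y\<in>N. x + y \<in> N) \<and> (\<forall>r\<in>R. \<forall>x\<in>N. r *s x \<in> N)"

lemma is_lattice_iff:
  "is_lattice scale R M \<longleftrightarrow> (\<exists>b. finite b \<and> independent b \<and> span b = UNIV \<and> M = Rspan b)"
  unfolding is_lattice_def rspan_def by auto

lemma uniformizer_power_nonzero: "pi ^ n \<noteq> 0"
  using uniformizer_nonzero by simp

lemma val_uniformizer_power: "v (pi ^ n) = int n"
  using val_power[OF uniformizer_nonzero] val_uniformizer by simp

lemma uniformizer_power_in_val_ring: "pi ^ n \<in> R"
  by (simp add: val_ring_def val_uniformizer_power)

lemma uniformizer_in_val_ring: "pi \<in> R"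
  using uniformizer_power_in_val_ring[of 1] by simp

lemma rsubmodule_zero: "rsubmodule N \<Longrightarrow> 0 \<in> N"
  and rsubmodule_add: "rsubmodule N \<Longrightarrow> x \<in> N \<Longrightarrow> y \<in> N \<Longrightarrow> x + y \<in> N"
  and rsubmodule_scale: "rsubmodule N \<Longrightarrow> r \<in> R \<Longrightarrow> x \<in> N \<Longrightarrow> r *s x \<in> N"
  unfolding rsubmodule_def by auto

lemma rsubmodule_diff:
  assumes "rsubmodule N" "x \<in> N" "y \<in> N"
  shows "x - y \<in> N"
proof -
  have "(-1) *s y \<in> N"
    using rsubmodule_scale[OF assms(1) val_ring_uminus[OF val_ring_one] assms(3)] .
  then show ?thesis
    using rsubmodule_add[OF assms(1,2)] by fastforce
qed

lemma rsubmodule_sum: "rsubmodule N \<Longrightarrow> (\<And>i. i \<in> I \<Longrightarrow> f i \<in> N) \<Longrightarrow> sum f I \<in> N"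
  by (induction I rule: infinite_finite_induct) (auto intro: rsubmodule_zero rsubmodule_add)

lemma rsubmodule_rspan: "rsubmodule (Rspan S)"
  unfolding rsubmodule_def
proof (intro conjI ballI)
  show "0 \<in> Rspan S"
    unfolding rspan_def by (auto intro!: exI[of _ "\<lambda>_. 0"] simp: val_ring_zero)
next
  fix x y assume "x \<in> Rspan S" "y \<in> Rspan S"
  then obtain c d where "\<forall>e\<in>S. c e \<in> R" "x = (\<Sum>e\<in>S. c e *s e)"
    "\<forall>e\<in>S. d e \<in> R" "y = (\<Sum>e\<in>S. d e *s e)"
    unfolding rspan_def by auto
  then show "x + y \<in> Rspan S"
    unfolding rspan_def
    by (auto intro!: exI[of _ "\<lambda>e. c e + d e"] simp: val_ring_add scale_left_distrib sum.distrib)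
next
  fix r x assume "r \<in> R" "x \<in> Rspan S"
  then obtain c where "\<forall>e\<in>S. c e \<in> R" "x = (\<Sum>e\<in>S. c e *s e)"
    unfolding rspan_def by auto
  with \<open>r \<in> R\<close> show "r *s x \<in> Rspan S"
    unfolding rspan_def by (auto intro!: exI[of _ "\<lambda>e. r * c e"] simp: val_ring_mult scale_sum_right)
qed

lemma lattice_rsubmodule: "is_lattice scale R M \<Longrightarrow> rsubmodule M"
  using is_lattice_iff rsubmodule_rspan by auto

lemma rspan_subset_rsubmodule:
  assumes "rsubmodule N" "S \<subseteq> N"
  shows "Rspan S \<subseteq> N"
proof
  fix y assume "y \<in> Rspan S"
  then obtain c where "\<forall>x\<in>S. c x \<in> R" "y = (\<Sum>x\<in>S. c x *s x)"
    unfolding rspan_def by auto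
  with assms show "y \<in> N"
    by (auto intro!: rsubmodule_sum rsubmodule_scale)
qed

lemma rspan_subset_span: "Rspan S \<subseteq> span S"
  unfolding rspan_def by (auto intro: span_sum span_scale span_base)

lemma rspan_base: "finite S \<Longrightarrow> x \<in> S \<Longrightarrow> x \<in> Rspan S"
  unfolding rspan_def using sum_delta_scale[of S x, symmetric]
  by (auto intro!: exI[of _ "\<lambda>e. if e = x then 1 else 0"] simp: val_ring_zero val_ring_one)

lemma rspan_empty: "Rspan {} = {0}"
  unfolding rspan_def by auto

lemma rspan_insert:
  assumes "finite S" "e \<notin> S"
  shows "Rspan (insert e S) = {r *s e + y | r y. r \<in> R \<and> y \<in> Rspan S}"
proof (intro equalityI subsetI)
  fix x assume "x \<in> Rspan (insert e S)"
  then obtain c where "\<forall>z\<in>insert e S. c z \<in> R" "x = c e *s e + (\<Sum>z\<in>S. c z *s z)"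
    using assms unfolding rspan_def by auto
  then show "x \<in> {r *s e + y | r y. r \<in> R \<and> y \<in> Rspan S}"
    unfolding rspan_def by auto
next
  fix x assume "x \<in> {r *s e + y | r y. r \<in> R \<and> y \<in> Rspan S}"
  then obtain r d where "r \<in> R" "\<forall>z\<in>S. d z \<in> R" "x = r *s e + (\<Sum>z\<in>S. d z *s z)"
    unfolding rspan_def by auto
  moreover have "(\<Sum>z\<in>S. (d(e := r)) z *s z) = (\<Sum>z\<in>S. d z *s z)"
    using assms by (intro sum.cong) auto
  ultimately show "x \<in> Rspan (insert e S)"
    unfolding rspan_def using assms by (intro CollectI exI[of _ "d(e := r)"]) auto
qed

lemma rspan_insert_coeff:
  assumes "finite S" "e \<notin> span S" "z \<in> Rspan (insert e S)" "z - c *s e \<in> span S"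
  shows "c \<in> R" "z - c *s e \<in> Rspan S"
proof -
  have "e \<notin> S"
    using assms(2) span_base by blast
  then obtain r y where ry: "r \<in> R" "y \<in> Rspan S" "z = r *s e + y"
    using rspan_insert[OF assms(1)] assms(3) by auto
  then have "z - r *s e \<in> span S"
    using rspan_subset_span by auto
  then have "c = r"
    using coeff_unique_mod_span[OF assms(2,4)] by blast
  with ry show "c \<in> R" "z - c *s e \<in> Rspan S"
    by auto
qed

lemma ex_uniformizer_power_clears:
  assumes "finite Z"
  shows "\<exists>n. \<forall>z\<in>Z. pi ^ n * z \<in> R"
proof -
  define n where "n = (\<Sum>z\<in>Z. nat (- v z))"
  have "pi ^ n * z \<in> R" if "z \<in> Z" for z
  proof (cases "z = 0")
    case False
    have "nat (- v z) \<le> n"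
      unfolding n_def using member_le_sum[of z Z "\<lambda>z. nat (- v z)"] that assms by simp
    then have "- v z \<le> int n"
      by linarith
    moreover have "v (pi ^ n * z) = int n + v z"
      using val_mult[OF uniformizer_power_nonzero False] val_uniformizer_power by simp
    ultimately show ?thesis
      by (simp add: val_ring_def)
  qed (simp add: val_ring_def)
  then show ?thesis by blast
qed

lemma ex_uniformizer_power_into_rspan:
  assumes "finite S" "finite F" "F \<subseteq> span S"
  shows "\<exists>n. \<forall>y\<in>F. pi ^ n *s y \<in> Rspan S"
proof -
  have "\<forall>y\<in>F. \<exists>u. y = (\<Sum>e\<in>S. u e *s e)"
    using assms(3) span_finite[OF assms(1)] by auto
  from bchoice[OF this] obtain u where u: "\<And>y. y \<in> F \<Longrightarrow> y = (\<Sum>e\<in>S. u y e *s e)"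
    by blast
  obtain n where n: "\<forall>z\<in>(\<lambda>(y, e). u y e) ` (F \<times> S). pi ^ n * z \<in> R"
    using ex_uniformizer_power_clears[of "(\<lambda>(y, e). u y e) ` (F \<times> S)"] assms(1,2) by auto
  have "pi ^ n *s y \<in> Rspan S" if "y \<in> F" for y
  proof -
    have "pi ^ n *s y = (\<Sum>e\<in>S. (pi ^ n * u y e) *s e)"
      by (subst u[OF that]) (simp add: scale_sum_right)
    then show ?thesis
      using n that unfolding rspan_def by (auto intro!: exI[of _ "\<lambda>e. pi ^ n * u y e"])
  qed
  then show ?thesis by blast
qed

lemma span_insert_generator:
  assumes e: "e \<notin> span b0" and g0: "independent g0" "span g0 = span b0"
    and x0: "x0 - c0 *s e \<in> span b0" "c0 \<noteq> 0"
  shows "independent (insert x0 g0)" "span (insert x0 g0) = span (insert e b0)"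
proof -
  have "x0 \<notin> span b0"
    using coeff_unique_mod_span[OF e x0(1), of 0] x0(2) by auto
  then show "independent (insert x0 g0)"
    using independent_insertI g0 by simp
  have "y - k *s x0 \<in> span b0 \<longleftrightarrow> y - (k * c0) *s e \<in> span b0" for y k
  proof -
    have "y - k *s x0 = (y - (k * c0) *s e) - k *s (x0 - c0 *s e)"
      by (simp add: scale_right_diff_distrib)
    then show ?thesis
      using x0(1) span_scale[OF x0(1), of k] by (metis span_add span_diff diff_add_cancel)
  qed
  moreover have "(\<exists>k. y - (k * c0) *s e \<in> span b0) \<longleftrightarrow> (\<exists>k. y - k *s e \<in> span b0)" for y
    using x0(2) by (metis nonzero_divide_eq_eq)
  ultimately show "span (insert x0 g0) = span (insert e b0)"
    unfolding set_eq_iff span_breakdown_eq g0(2) by blast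
qed

lemma rspan_insert_generator:
  assumes e: "e \<notin> span b0" and N: "rsubmodule N" "N \<subseteq> span (insert e b0)"
    and g0: "finite g0" "N \<inter> span b0 = Rspan g0"
    and x0: "x0 \<in> N" "x0 - c0 *s e \<in> span b0" "c0 \<noteq> 0"
    and generator: "\<And>x c. x \<in> N \<Longrightarrow> x - c *s e \<in> span b0 \<Longrightarrow> c / c0 \<in> R"
  shows "N = Rspan (insert x0 g0)"
proof (intro equalityI subsetI)
  have "x0 \<notin> span b0"
    using coeff_unique_mod_span[OF e x0(2), of 0] x0(3) by auto
  then have "x0 \<notin> g0"
    using g0(2) rspan_base[OF g0(1)] by blast
  fix x assume x: "x \<in> N"
  then obtain c where c: "x - c *s e \<in> span b0"
    using N(2) span_breakdown_eq by blast
  define q where "q = c / c0"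
  have q: "q \<in> R"
    using generator[OF x c] by (simp add: q_def)
  have "x - q *s x0 = (x - c *s e) - q *s (x0 - c0 *s e)"
    using x0(3) by (simp add: q_def scale_right_diff_distrib)
  also have "\<dots> \<in> span b0"
    by (intro span_diff span_scale c x0(2))
  finally have "x - q *s x0 \<in> span b0" .
  moreover have "x - q *s x0 \<in> N"
    using rsubmodule_diff[OF N(1) x rsubmodule_scale[OF N(1) q x0(1)]] .
  ultimately have "x - q *s x0 \<in> Rspan g0"
    using g0(2) by blast
  then show "x \<in> Rspan (insert x0 g0)"
    using rspan_insert[OF g0(1) \<open>x0 \<notin> g0\<close>] q by force
next
  fix x assume "x \<in> Rspan (insert x0 g0)"
  moreover have "insert x0 g0 \<subseteq> N"
    using x0(1) g0(2) rspan_base[OF g0(1)] by blast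
  ultimately show "x \<in> N"
    using rspan_subset_rsubmodule[OF N(1)] by blast
qed

lemma ex_least_coeff_generator:
  assumes b0: "finite b0" and e: "e \<notin> span b0"
    and N: "pi ^ a *s e \<in> N" "\<And>x. x \<in> N \<Longrightarrow> pi ^ a *s x \<in> Rspan (insert e b0)"
  shows "\<exists>x0 c0. x0 \<in> N \<and> x0 - c0 *s e \<in> span b0 \<and> c0 \<noteq> 0 \<and>
           (\<forall>x c. x \<in> N \<longrightarrow> x - c *s e \<in> span b0 \<longrightarrow> c / c0 \<in> R)"
proof -
  define I where "I = {c. \<exists>x\<in>N. x - c *s e \<in> span b0}"
  have "pi ^ a \<in> I"
    using N(1) span_zero unfolding I_def by force
  moreover have "- int a \<le> v c" if c: "c \<in> I" "c \<noteq> 0" for c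
  proof -
    obtain x where "x \<in> N" "x - c *s e \<in> span b0"
      using c(1) unfolding I_def by blast
    then have "pi ^ a *s x - (pi ^ a * c) *s e \<in> span b0"
      using span_scale[of "x - c *s e" b0 "pi ^ a"] by (simp add: scale_right_diff_distrib)
    then have "pi ^ a * c \<in> R"
      using rspan_insert_coeff(1)[OF b0 e N(2)[OF \<open>x \<in> N\<close>]] by blast
    moreover have "v (pi ^ a * c) = int a + v c"
      using val_mult[OF uniformizer_power_nonzero c(2)] val_uniformizer_power by simp
    ultimately show ?thesis
      using c(2) uniformizer_nonzero by (simp add: val_ring_def)
  qed
  ultimately obtain c0 where "c0 \<in> I" "c0 \<noteq> 0" "\<forall>c\<in>I. c / c0 \<in> R"
    using ex_least_val_generator[of "pi ^ a" I] uniformizer_power_nonzero by blast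
  then show ?thesis
    unfolding I_def by blast
qed

lemma rsubmodule_commensurable_free:
  assumes "finite b" "independent b" "rsubmodule N" "N \<subseteq> span b"
    and "\<And>e. e \<in> b \<Longrightarrow> pi ^ a *s e \<in> N" "\<And>x. x \<in> N \<Longrightarrow> pi ^ a *s x \<in> Rspan b"
  shows "\<exists>g. finite g \<and> independent g \<and> span g = span b \<and> N = Rspan g"
  using assms
proof (induction b arbitrary: N rule: finite_induct)
  case empty
  then have "N = {0}"
    using rsubmodule_zero by auto
  then show ?case
    by (intro exI[of _ "{}"]) (simp add: rspan_empty independent_empty)
next
  case (insert e b0 N)
  have b0: "independent b0" and e: "e \<notin> span b0"
    using insert.prems(1) insert.hyps(2) by (auto simp: independent_insert)
  obtain g0 where g0: "finite g0" "independent g0" "span g0 = span b0" "N \<inter> span b0 = Rspan g0"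
  proof -
    have "rsubmodule (N \<inter> span b0)"
      using insert.prems(2) unfolding rsubmodule_def by (auto intro: span_zero span_add span_scale)
    moreover have "pi ^ a *s e' \<in> N \<inter> span b0" if "e' \<in> b0" for e'
      using insert.prems(4) that by (auto intro: span_scale span_base)
    moreover have "pi ^ a *s x \<in> Rspan b0" if "x \<in> N \<inter> span b0" for x
      using rspan_insert_coeff(2)[OF insert.hyps(1) e insert.prems(5), of x 0] that span_scale
      by auto
    ultimately show ?thesis
      using insert.IH[OF b0] that by blast
  qed
  obtain x0 c0 where x0: "x0 \<in> N" "x0 - c0 *s e \<in> span b0" "c0 \<noteq> 0"
    and generator: "\<And>x c. x \<in> N \<Longrightarrow> x - c *s e \<in> span b0 \<Longrightarrow> c / c0 \<in> R"
    using ex_least_coeff_generator[OF insert.hyps(1) e insert.prems(4,5)] by blast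
  have "N = Rspan (insert x0 g0)"
    by (rule rspan_insert_generator[OF e insert.prems(2,3) g0(1,4) x0 generator])
  then show ?case
    using span_insert_generator[OF e g0(2,3) x0(2,3)] g0(1) by blast
qed

lemma lattice_commensurable:
  assumes "is_lattice scale R M" "rsubmodule N"
    and "\<And>x. x \<in> M \<Longrightarrow> pi ^ a *s x \<in> N" "\<And>x. x \<in> N \<Longrightarrow> pi ^ a *s x \<in> M"
  shows "is_lattice scale R N"
proof -
  obtain b where b: "finite b" "independent b" "span b = UNIV" "M = Rspan b"
    using assms(1) is_lattice_iff by auto
  have "\<exists>g. finite g \<and> independent g \<and> span g = span b \<and> N = Rspan g"
    using assms(3,4) rspan_base[OF b(1)] b
    by (intro rsubmodule_commensurable_free[OF b(1,2) assms(2)]) auto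
  then show ?thesis
    using b(3) is_lattice_iff by auto
qed

lemma rsubmodule_plus_scaled:
  assumes M: "rsubmodule M" and U: "rsubmodule U"
  shows "rsubmodule (plus_scaled scale M c U)"
  unfolding rsubmodule_def plus_scaled_def
proof (intro conjI ballI)
  show "0 \<in> {x + c *s u | x u. x \<in> M \<and> u \<in> U}"
    using rsubmodule_zero[OF M] rsubmodule_zero[OF U] by force
next
  fix y1 y2 assume "y1 \<in> {x + c *s u | x u. x \<in> M \<and> u \<in> U}" "y2 \<in> {x + c *s u | x u. x \<in> M \<and> u \<in> U}"
  then obtain x1 u1 x2 u2 where "x1 \<in> M" "u1 \<in> U" "x2 \<in> M" "u2 \<in> U"
    and "y1 + y2 = (x1 + x2) + c *s (u1 + u2)"
    by (auto simp: scale_right_distrib algebra_simps)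
  then show "y1 + y2 \<in> {x + c *s u | x u. x \<in> M \<and> u \<in> U}"
    using rsubmodule_add[OF M] rsubmodule_add[OF U] by blast
next
  fix r y assume r: "r \<in> R" and "y \<in> {x + c *s u | x u. x \<in> M \<and> u \<in> U}"
  then obtain x u where "x \<in> M" "u \<in> U" and "r *s y = r *s x + c *s (r *s u)"
    by (auto simp: scale_right_distrib mult.commute)
  then show "r *s y \<in> {x + c *s u | x u. x \<in> M \<and> u \<in> U}"
    using rsubmodule_scale[OF M r] rsubmodule_scale[OF U r] by blast
qed

lemma rsubmodule_image_scale:
  assumes M: "rsubmodule M"
  shows "rsubmodule ((*s) c ` M)"
  unfolding rsubmodule_def
proof (intro conjI ballI)
  show "0 \<in> (*s) c ` M"
    using rsubmodule_zero[OF M] image_eqI[of 0 "(*s) c" 0] by simp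
next
  fix x y assume "x \<in> (*s) c ` M" "y \<in> (*s) c ` M"
  then show "x + y \<in> (*s) c ` M"
    using rsubmodule_add[OF M] by (auto simp: scale_right_distrib[symmetric])
next
  fix r x assume "r \<in> R" "x \<in> (*s) c ` M"
  then obtain x' where "x' \<in> M" "x = c *s x'"
    by blast
  moreover have "r *s c *s x' = c *s r *s x'"
    by (simp add: mult.commute)
  ultimately show "r *s x \<in> (*s) c ` M"
    using rsubmodule_scale[OF M \<open>r \<in> R\<close>] by (metis image_eqI)
qed

end

locale dvr_form_space = dvr_vector_space scale v pi
  for scale :: "'k::field \<Rightarrow> 'v::ab_group_add \<Rightarrow> 'v" (infixr \<open>*s\<close> 75) and v pi +
  fixes B :: "'v \<Rightarrow> 'v \<Rightarrow> 'k"
  assumes B_add_left: "\<And>x y z. B (x + y) z = B x z + B y z"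
    and B_add_right: "\<And>x y z. B x (y + z) = B x y + B x z"
    and B_scale_left: "\<And>c x y. B (c *s x) y = c * B x y"
    and B_scale_right: "\<And>c x y. B x (c *s y) = c * B x y"
    and B_nondegenerate: "\<And>x. (\<forall>y. B x y = 0) \<Longrightarrow> x = 0"
    and B_sign_symmetric: "\<And>x y. B y x = B x y \<or> B y x = - B x y"
begin

abbreviation "dual M \<equiv> dual_lattice R B M"

lemma B_zero_left [simp]: "B 0 y = 0"
  using B_scale_left[of 0 0 y] by simp

lemma B_zero_right [simp]: "B x 0 = 0"
  using B_scale_right[of x 0 0] by simp

lemma B_sum_left: "B (sum f I) y = (\<Sum>i\<in>I. B (f i) y)"
  by (induction I rule: infinite_finite_induct) (auto simp: B_add_left)

lemma B_sum_right: "B x (sum f I) = (\<Sum>i\<in>I. B x (f i))"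
  by (induction I rule: infinite_finite_induct) (auto simp: B_add_right)

lemma B_commute_in_val_ring: "B y x \<in> R \<longleftrightarrow> B x y \<in> R"
  using B_sign_symmetric[of x y] B_sign_symmetric[of y x] val_ring_uminus by (metis minus_minus)

lemma rsubmodule_dual: "rsubmodule (dual M)"
  unfolding rsubmodule_def dual_lattice_def
  by (auto simp: B_add_left B_scale_left val_ring_zero val_ring_add val_ring_mult)

lemma dual_antimono: "M \<subseteq> N \<Longrightarrow> dual N \<subseteq> dual M"
  unfolding dual_lattice_def by auto

lemma ex_dual_basis:
  assumes b: "finite b" "independent b" "span b = UNIV"
  shows "\<exists>y. \<forall>e\<in>b. \<forall>e'\<in>b. B e' (y e) = (if e' = e then 1 else 0)"
proof -
  define S where "S y = (\<Sum>e\<in>b. B e y *s e)" for y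
  have "Vector_Spaces.linear (*s) (*s) S"
    by (rule Vector_Spaces.linear_iff[THEN iffD2])
      (simp add: S_def B_add_right B_scale_right scale_left_distrib sum.distrib scale_sum_right
        vector_space_axioms)
  then interpret S: Vector_Spaces.linear "(*s)" "(*s)" S .
  have "y = 0" if "S y = 0" for y
  proof -
    have zero_on_basis: "B e y = 0" if "e \<in> b" for e
      using independent_coeff_unique[OF b(1,2), of "\<lambda>e. B e y" "\<lambda>_. 0"] \<open>S y = 0\<close> that
      by (simp add: S_def)
    have "B x y = 0" for x
    proof -
      obtain u where "x = (\<Sum>e\<in>b. u e *s e)"
        using span_finite[OF b(1)] b(3) by blast
      with zero_on_basis show ?thesis
        by (simp add: B_sum_left B_scale_left)
    qed
    then have "B y x = 0" for x
      using B_sign_symmetric[of x y] by auto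
    then show "y = 0"
      using B_nondegenerate by blast
  qed
  then have "inj S"
    using S.inj_iff_eq_0 by blast
  interpret finite_dimensional_vector_space scale b
    using b by unfold_locales
  have "surj S"
    using linear_inj_imp_surj[OF S.linear_axioms \<open>inj S\<close>] .
  then obtain y where y: "\<And>e. S (y e) = e"
    by (metis surjD)
  have "B e' (y e) = (if e' = e then 1 else 0)" if "e \<in> b" "e' \<in> b" for e e'
  proof -
    have "(\<Sum>x\<in>b. B x (y e) *s x) = (\<Sum>x\<in>b. (if x = e then 1 else 0) *s x)"
      using y[of e] sum_delta_scale[OF b(1) that(1)] by (simp add: S_def)
    then show ?thesis
      by (rule independent_coeff_unique[OF b(1,2) _ that(2)])
  qed
  then show ?thesis by blast
qed

lemma dual_lattice_bounded:
  assumes "is_lattice scale R M"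
  shows "\<exists>n. \<forall>x\<in>dual M. pi ^ n *s x \<in> M"
proof -
  obtain b where b: "finite b" "independent b" "span b = UNIV" "M = Rspan b"
    using assms is_lattice_iff by auto
  obtain y where y: "\<And>e e'. e \<in> b \<Longrightarrow> e' \<in> b \<Longrightarrow> B e' (y e) = (if e' = e then 1 else 0)"
    using ex_dual_basis[OF b(1-3)] by blast
  obtain n where n: "\<forall>z\<in>y ` b. pi ^ n *s z \<in> Rspan b"
    using ex_uniformizer_power_into_rspan[OF b(1), of "y ` b"] b(1,3) by auto
  have "pi ^ n *s x \<in> M" if x: "x \<in> dual M" for x
  proof -
    obtain a where a: "x = (\<Sum>e\<in>b. a e *s e)"
      using span_finite[OF b(1)] b(3) by blast
    have "pi ^ n * a e \<in> R" if "e \<in> b" for e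
    proof -
      have "B x (y e) = (\<Sum>e'\<in>b. if e' = e then a e' else 0)"
        by (auto simp: a B_sum_left B_scale_left y that intro: sum.cong)
      also have "\<dots> = a e"
        using that b(1) by simp
      finally have "pi ^ n * a e = B x (pi ^ n *s y e)"
        by (simp add: B_scale_right)
      with x n that b(4) show ?thesis
        unfolding dual_lattice_def by auto
    qed
    moreover have "pi ^ n *s x = (\<Sum>e\<in>b. (pi ^ n * a e) *s e)"
      by (simp add: a scale_sum_right)
    ultimately show ?thesis
      unfolding b(4) rspan_def by (auto intro!: exI[of _ "\<lambda>e. pi ^ n * a e"])
  qed
  then show ?thesis by blast
qed

lemma lattice_between_dual:
  assumes M: "is_lattice scale R M" and N: "rsubmodule N" "M \<subseteq> N" "N \<subseteq> dual M"
  shows "is_lattice scale R N"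
proof -
  obtain n where n: "\<forall>x\<in>dual M. pi ^ n *s x \<in> M"
    using dual_lattice_bounded[OF M] by blast
  from lattice_rsubmodule[OF M] show ?thesis
    using n N rsubmodule_scale[OF _ uniformizer_power_in_val_ring]
    by (intro lattice_commensurable[OF M N(1), of n]) auto
qed

lemma ex_uniformizer_power_integral_on_lattice:
  assumes "is_lattice scale R L"
  shows "\<exists>n. \<forall>x\<in>L. \<forall>y\<in>L. pi ^ n * B x y \<in> R"
proof -
  obtain b where b: "finite b" "L = Rspan b"
    using assms is_lattice_iff by auto
  obtain n where n: "\<forall>z\<in>(\<lambda>(e, e'). B e e') ` (b \<times> b). pi ^ n * z \<in> R"
    using ex_uniformizer_power_clears[of "(\<lambda>(e, e'). B e e') ` (b \<times> b)"] b(1) by auto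
  have "pi ^ n * B x y \<in> R" if xy: "x \<in> L" "y \<in> L" for x y
  proof -
    obtain c where c: "\<forall>e\<in>b. c e \<in> R" "x = (\<Sum>e\<in>b. c e *s e)"
      using xy(1) b(2) unfolding rspan_def by auto
    obtain d where d: "\<forall>e\<in>b. d e \<in> R" "y = (\<Sum>e\<in>b. d e *s e)"
      using xy(2) b(2) unfolding rspan_def by auto
    have "pi ^ n * B x y = (\<Sum>e'\<in>b. \<Sum>e\<in>b. c e * d e' * (pi ^ n * B e e'))"
      by (simp add: c(2) d(2) B_sum_left B_sum_right B_scale_left B_scale_right
          sum_distrib_left algebra_simps)
    also have "\<dots> \<in> R"
      using c(1) d(1) n by (intro val_ring_sum val_ring_mult[OF val_ring_mult]) auto
    finally show ?thesis .
  qed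
  then show ?thesis by blast
qed

lemma image_scale_integral:
  assumes "\<forall>x\<in>L. \<forall>y\<in>L. c * B x y \<in> R" "c \<in> R"
  shows "(*s) c ` L \<subseteq> dual ((*s) c ` L)"
proof
  fix x assume "x \<in> (*s) c ` L"
  then obtain x' where x': "x' \<in> L" "x = c *s x'"
    by blast
  show "x \<in> dual ((*s) c ` L)"
    unfolding dual_lattice_def[of _ _ "(*s) c ` L"]
  proof (rule CollectI, rule ballI)
    fix y assume "y \<in> (*s) c ` L"
    then obtain y' where y': "y' \<in> L" "y = c *s y'"
      by blast
    have "B x y = c * (c * B x' y')"
      by (simp add: x'(2) y'(2) B_scale_left B_scale_right)
    then show "B x y \<in> R"
      using assms x'(1) y'(1) by (simp add: val_ring_mult)
  qed
qed

lemma plus_scaled_dual_integral: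
  assumes integral: "M \<subseteq> dual M" and bound: "(*s) (pi ^ Suc k) ` dual M \<subseteq> M" and "0 < k"
  shows "plus_scaled scale M (pi ^ k) (dual M) \<subseteq> dual (plus_scaled scale M (pi ^ k) (dual M))"
proof
  fix y1 assume "y1 \<in> plus_scaled scale M (pi ^ k) (dual M)"
  then obtain x1 u1 where 1: "x1 \<in> M" "u1 \<in> dual M" "y1 = x1 + pi ^ k *s u1"
    unfolding plus_scaled_def by auto
  show "y1 \<in> dual (plus_scaled scale M (pi ^ k) (dual M))"
    unfolding dual_lattice_def[of _ _ "plus_scaled scale M (pi ^ k) (dual M)"]
  proof (rule CollectI, rule ballI)
    fix y2 assume "y2 \<in> plus_scaled scale M (pi ^ k) (dual M)"
    then obtain x2 u2 where 2: "x2 \<in> M" "u2 \<in> dual M" "y2 = x2 + pi ^ k *s u2"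
      unfolding plus_scaled_def by auto
    have "B x1 x2 \<in> R" "B u2 x1 \<in> R" "B u1 x2 \<in> R"
      using integral 1(1,2) 2(1,2) unfolding dual_lattice_def by auto
    then have "B x1 u2 \<in> R"
      using B_commute_in_val_ring by blast
    moreover note \<open>B x1 x2 \<in> R\<close> \<open>B u1 x2 \<in> R\<close>
    moreover have "pi ^ k * (pi ^ k * B u1 u2) \<in> R"
    proof -
      obtain j where j: "k = Suc j"
        using \<open>0 < k\<close> gr0_implies_Suc by blast
      have "pi ^ Suc k *s u1 \<in> M"
        using bound 1(2) by auto
      then have "B u2 (pi ^ Suc k *s u1) \<in> R"
        using 2(2) unfolding dual_lattice_def by blast
      then have "pi ^ Suc k * B u1 u2 \<in> R"
        using B_commute_in_val_ring[of "pi ^ Suc k *s u1" u2] by (simp add: B_scale_left)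
      have "pi ^ k * (pi ^ k * B u1 u2) = pi ^ j * (pi ^ Suc k * B u1 u2)"
        by (simp add: j)
      also have "\<dots> \<in> R"
        by (rule val_ring_mult[OF uniformizer_power_in_val_ring]) fact
      finally show ?thesis .
    qed
    moreover have "B y1 y2 = B x1 x2 + pi ^ k * B x1 u2 + (pi ^ k * B u1 x2 + pi ^ k * (pi ^ k * B u1 u2))"
      by (simp add: 1(3) 2(3) B_add_left B_add_right B_scale_left B_scale_right algebra_simps)
    ultimately show "B y1 y2 \<in> R"
      by (simp add: val_ring_add val_ring_mult uniformizer_power_in_val_ring)
  qed
qed

end

locale dvr_adjoint_action = dvr_form_space scale v pi B
  for scale :: "'k::field \<Rightarrow> 'v::ab_group_add \<Rightarrow> 'v" (infixr \<open>*s\<close> 75) and v pi B +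
  fixes act :: "'a \<Rightarrow> 'v \<Rightarrow> 'v" and inv :: "'a \<Rightarrow> 'a"
  assumes act_add: "\<And>a x y. act a (x + y) = act a x + act a y"
    and act_scale: "\<And>r a x. r \<in> val_ring v \<Longrightarrow> act a (r *s x) = r *s act a x"
    and B_adjoint: "\<And>a x y. B (act a x) y = B x (act (inv a) y)"
begin

definition stable :: "'v set \<Rightarrow> bool" where
  "stable M \<longleftrightarrow> (\<forall>a. \<forall>x\<in>M. act a x \<in> M)"

lemma stable_dual: "stable M \<Longrightarrow> stable (dual M)"
  unfolding stable_def dual_lattice_def by (auto simp: B_adjoint)

lemma stable_plus_scaled:
  assumes "stable M" "stable U" "c \<in> R"
  shows "stable (plus_scaled scale M c U)"
  unfolding stable_def plus_scaled_def
proof (intro allI ballI)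
  fix a y assume "y \<in> {x + c *s u | x u. x \<in> M \<and> u \<in> U}"
  then obtain x u where "x \<in> M" "u \<in> U" "y = x + c *s u"
    by blast
  moreover have "act a y = act a x + c *s act a u"
    using \<open>y = x + c *s u\<close> assms(3) by (simp add: act_add act_scale)
  ultimately show "act a y \<in> {x + c *s u | x u. x \<in> M \<and> u \<in> U}"
    using assms(1,2) unfolding stable_def by blast
qed

lemma stable_image_scale: "stable M \<Longrightarrow> c \<in> R \<Longrightarrow> stable ((*s) c ` M)"
  unfolding stable_def by (auto simp: act_scale)

lemma almost_self_dual_step:
  assumes M: "is_lattice scale R M" "stable M" "M \<subseteq> dual M"
    and bound: "(*s) (pi ^ Suc k) ` dual M \<subseteq> M" and "0 < k"
  shows "\<exists>N. is_lattice scale R N \<and> stable N \<and> N \<subseteq> dual N \<and> (*s) (pi ^ k) ` dual N \<subseteq> N"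
proof -
  define N where "N = plus_scaled scale M (pi ^ k) (dual M)"
  have rM: "rsubmodule M"
    using lattice_rsubmodule[OF M(1)] .
  have "M \<subseteq> N"
    unfolding N_def plus_scaled_def using rsubmodule_zero[OF rsubmodule_dual] by force
  have "N \<subseteq> dual N"
    unfolding N_def by (rule plus_scaled_dual_integral[OF M(3) bound \<open>0 < k\<close>])
  moreover have "dual N \<subseteq> dual M"
    by (rule dual_antimono[OF \<open>M \<subseteq> N\<close>])
  ultimately have "is_lattice scale R N"
    using lattice_between_dual[OF M(1) _ \<open>M \<subseteq> N\<close>] rsubmodule_plus_scaled[OF rM rsubmodule_dual]
    unfolding N_def by blast
  moreover have "stable N"
    unfolding N_def by (rule stable_plus_scaled[OF M(2) stable_dual[OF M(2)] uniformizer_power_in_val_ring])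
  moreover have "(*s) (pi ^ k) ` dual N \<subseteq> N"
    using \<open>dual N \<subseteq> dual M\<close> rsubmodule_zero[OF rM] unfolding N_def plus_scaled_def by force
  ultimately show ?thesis
    using \<open>N \<subseteq> dual N\<close> by blast
qed

lemma ex_almost_self_dual_of_integral:
  assumes "is_lattice scale R M" "stable M" "M \<subseteq> dual M" "(*s) (pi ^ Suc m) ` dual M \<subseteq> M"
  shows "\<exists>N. is_lattice scale R N \<and> stable N \<and> almost_self_dual scale R pi B N"
  using assms
proof (induction m arbitrary: M)
  case 0
  then show ?case
    unfolding almost_self_dual_def by auto
next
  case (Suc m)
  then obtain N where "is_lattice scale R N" "stable N" "N \<subseteq> dual N" "(*s) (pi ^ Suc m) ` dual N \<subseteq> N"
    using almost_self_dual_step[of M "Suc m"] by blast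
  then show ?case
    by (rule Suc.IH)
qed

lemma ex_stable_almost_self_dual_lattice:
  assumes L: "is_lattice scale R L" "stable L"
  shows "\<exists>M. is_lattice scale R M \<and> stable M \<and> almost_self_dual scale R pi B M"
proof -
  obtain n where n: "\<forall>x\<in>L. \<forall>y\<in>L. pi ^ n * B x y \<in> R"
    using ex_uniformizer_power_integral_on_lattice[OF L(1)] by blast
  define M where "M = (*s) (pi ^ n) ` L"
  have rL: "rsubmodule L"
    using lattice_rsubmodule[OF L(1)] .
  have rM: "rsubmodule M"
    unfolding M_def by (rule rsubmodule_image_scale[OF rL])
  have "M \<subseteq> L"
    unfolding M_def using rsubmodule_scale[OF rL uniformizer_power_in_val_ring] by blast
  then have lattice: "is_lattice scale R M"
    by (intro lattice_commensurable[OF L(1) rM, of n]) (auto simp: M_def)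
  obtain c where c: "\<forall>x\<in>dual M. pi ^ c *s x \<in> M"
    using dual_lattice_bounded[OF lattice] by blast
  have "(*s) (pi ^ Suc c) ` dual M \<subseteq> M"
  proof
    fix y assume "y \<in> (*s) (pi ^ Suc c) ` dual M"
    then obtain x where x: "x \<in> dual M" and y: "y = pi *s pi ^ c *s x"
      by auto
    show "y \<in> M"
      unfolding y using c x by (intro rsubmodule_scale[OF rM uniformizer_in_val_ring]) blast
  qed
  moreover have "M \<subseteq> dual M"
    unfolding M_def by (rule image_scale_integral[OF n uniformizer_power_in_val_ring])
  moreover have "stable M"
    unfolding M_def by (rule stable_image_scale[OF L(2) uniformizer_power_in_val_ring])
  ultimately show ?thesis
    using ex_almost_self_dual_of_integral[OF lattice] by blast
qed

end

theorem theorem5p2p1: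
  fixes v :: "'k::field \<Rightarrow> int"
    and pi :: 'k
    and scale :: "'k \<Rightarrow> 'v::ab_group_add \<Rightarrow> 'v"
    and alg :: "'k \<Rightarrow> 'a::ring_1"
    and inv :: "'a \<Rightarrow> 'a"
    and act :: "'a \<Rightarrow> 'v \<Rightarrow> 'v"
    and B :: "'v \<Rightarrow> 'v \<Rightarrow> 'k"
    and L :: "'v set"
  assumes dv: "discrete_valuation v"
    and unif: "pi \<noteq> 0" "v pi = 1"
    \<comment> \<open>A is an R-algebra via alg : R \<rightarrow> centre of A\<close>
    and alg_one: "alg 1 = 1"
    and alg_add: "\<And>r s. r \<in> val_ring v \<Longrightarrow> s \<in> val_ring v \<Longrightarrow> alg (r + s) = alg r + alg s"
    and alg_mult: "\<And>r s. r \<in> val_ring v \<Longrightarrow> s \<in> val_ring v \<Longrightarrow> alg (r * s) = alg r * alg s"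
    and alg_central: "\<And>r a. r \<in> val_ring v \<Longrightarrow> alg r * a = a * alg r"
    \<comment> \<open>R-linear involution of A\<close>
    and inv_add: "\<And>a b. inv (a + b) = inv a + inv b"
    and inv_lin: "\<And>r a. r \<in> val_ring v \<Longrightarrow> inv (alg r * a) = alg r * inv a"
    and inv_mult: "\<And>a b. inv (a * b) = inv b * inv a"
    and inv_inv: "\<And>a. inv (inv a) = a"
    \<comment> \<open>V a finite-dimensional K-vector space\<close>
    and vs: "vector_space scale"
    and fin_dim: "\<exists>S. finite S \<and> module.span scale S = UNIV"
    \<comment> \<open>V an A-module via an R-bilinear map\<close>
    and act_add1: "\<And>a b x. act (a + b) x = act a x + act b x"
    and act_add2: "\<And>a x y. act a (x + y) = act a x + act a y"
    and act_R1: "\<And>r a x. r \<in> val_ring v \<Longrightarrow> act (alg r * a) x = scale r (act a x)"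
    and act_R2: "\<And>r a x. r \<in> val_ring v \<Longrightarrow> act a (scale r x) = scale r (act a x)"
    and act_one: "\<And>x. act 1 x = x"
    and act_mult: "\<And>a b x. act (a * b) x = act a (act b x)"
    \<comment> \<open>an A-stable lattice L\<close>
    and L_lat: "is_lattice scale (val_ring v) L"
    and L_stable: "\<And>a x. x \<in> L \<Longrightarrow> act a x \<in> L"
    \<comment> \<open>nondegenerate K-bilinear form compatible with the involution\<close>
    and B_add1: "\<And>x y z. B (x + y) z = B x z + B y z"
    and B_add2: "\<And>x y z. B x (y + z) = B x y + B x z"
    and B_scale1: "\<And>c x y. B (scale c x) y = c * B x y"
    and B_scale2: "\<And>c x y. B x (scale c y) = c * B x y"
    and B_nondeg: "\<And>x. (\<forall>y. B x y = 0) \<Longrightarrow> x = 0"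
    and B_adj: "\<And>a x y. B (act a x) y = B x (act (inv a) y)"
    and B_type: "(\<forall>x. B x x = 0) \<or> ((\<forall>x y. B x y = B y x) \<and> residue_char_not_2 v)"
  shows "\<exists>M. is_lattice scale (val_ring v) M \<and> (\<forall>a x. x \<in> M \<longrightarrow> act a x \<in> M) \<and>
             almost_self_dual scale (val_ring v) pi B M"
proof -
  have B_sign: "B y x = B x y \<or> B y x = - B x y" for x y
    using B_type alternating_imp_antisymmetric[of B, OF B_add1 B_add2] by blast
  interpret dvr_adjoint_action scale v pi B act inv
    by (intro dvr_adjoint_action.intro dvr_form_space.intro dvr_vector_space.intro valued_field.intro
        dvr_adjoint_action_axioms.intro dvr_form_space_axioms.intro dvr_vector_space_axioms.intro;
        fact vs dv unif B_add1 B_add2 B_scale1 B_scale2 B_nondeg B_sign act_add2 act_R2 B_adj)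
  have "stable L"
    unfolding stable_def using L_stable by blast
  then obtain M where "is_lattice scale (val_ring v) M" "stable M" "almost_self_dual scale (val_ring v) pi B M"
    using ex_stable_almost_self_dual_lattice[OF L_lat] by blast
  then show ?thesis
    unfolding stable_def by blast
qed

end
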